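(* Let $X$ be an $n$-dimensional real normed space. Suppose that $Y, X_0 \subseteq X$ are linear subspaces such that $Y_0 =X_0 \cap Y$ is non-empty and $\lambda(Y_0, Y)=1$. Then $\lambda(Y, X) \geq \lambda(Y_0, X_0)$.
   Context: For a linear subspace $V$ of a normed space $W$, a projection onto $V$ is a linear $P:W\to V$ with $P|_V=\mathrm{id}_V$, and $\lambda(V,W)$ is the infimum of the operator norms of such projections. *)

theory Defs
  imports "HOL-Analysis.Analysis"
begin

definition linear_on :: "'a::real_vector set \<Rightarrow> ('a \<Rightarrow> 'a) \<Rightarrow> bool" where
  "linear_on W P \<longleftrightarrow> (\<forall>x\<in>W. \<forall>y\<in>W. P (x + y) = P x + P y) \<and>
                      (\<forall>c. \<forall>x\<in>W. P (c *\<^sub>R x) = c *\<^sub>R P x)"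

definition opnorm_on :: "'a::real_normed_vector set \<Rightarrow> ('a \<Rightarrow> 'a) \<Rightarrow> real" where
  "opnorm_on W P = Inf {C. 0 \<le> C \<and> (\<forall>x\<in>W. norm (P x) \<le> C * norm x)}"

definition projections_onto :: "'a::real_normed_vector set \<Rightarrow> 'a set \<Rightarrow> ('a \<Rightarrow> 'a) set" where
  "projections_onto V W = {P. linear_on W P \<and> P ` W \<subseteq> V \<and> (\<forall>v\<in>V. P v = v)}"

definition proj_const :: "'a::real_normed_vector set \<Rightarrow> 'a set \<Rightarrow> real" where
  "proj_const V W = Inf (opnorm_on W ` projections_onto V W)"

end

theory Submission
  imports Defs
begin

text \<open>
  If \<open>P\<close> is a projection of \<open>X\<close> onto \<open>Y\<close> and \<open>Q\<close> a projection of \<open>Y\<close> onto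
  \<open>Y\<^sub>0 = X\<^sub>0 \<inter> Y\<close>, then \<open>Q \<circ> P\<close> restricted to \<open>X\<^sub>0\<close> is a projection of \<open>X\<^sub>0\<close> onto
  \<open>Y\<^sub>0\<close> of norm at most \<open>\<parallel>Q\<parallel> \<parallel>P\<parallel>\<close>. Taking infima gives the submultiplicativity
  \<open>\<lambda>(Y\<^sub>0, X\<^sub>0) \<le> \<lambda>(Y\<^sub>0, Y) \<lambda>(Y, X)\<close>, and \<open>\<lambda>(Y\<^sub>0, Y) = 1\<close>.

  The infima are only meaningful because every linear map on a finite-dimensional normed
  space is bounded. This rests on the coefficient estimate
  \<open>\<Sum>\<^sub>b |t\<^sub>b| \<le> c \<parallel>\<Sum>\<^sub>b t\<^sub>b b\<parallel>\<close> for a finite independent set, proved by induction on the set: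
  the estimate for \<open>B\<close> makes \<open>span B\<close> closed, so a vector outside it has positive
  distance from it, which bounds its coefficient.
\<close>

lemma linear_imp_linear_on: "linear g \<Longrightarrow> linear_on W g"
  unfolding linear_on_def by (simp add: linear_add linear_scale)

lemma linear_on_compose:
  assumes "linear_on V P" "P ` V \<subseteq> W" "linear_on W Q"
  shows "linear_on V (Q \<circ> P)"
  using assms unfolding linear_on_def by (auto simp: image_subset_iff)

lemma linear_on_extends_to_linear:
  fixes P :: "'a::real_vector \<Rightarrow> 'a"
  assumes "subspace W" "linear_on W P"
  obtains g where "linear g" "\<And>x. x \<in> W \<Longrightarrow> g x = P x"
proof -
  obtain r where r: "linear r" "\<And>x. r x \<in> W" "\<And>x. x \<in> W \<Longrightarrow> r x = x"
    using linear_exists_left_inverse_on[OF linear_id assms(1) inj_on_id] by auto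
  have "linear_on UNIV (P \<circ> r)"
    by (rule linear_on_compose[OF linear_imp_linear_on[OF r(1)] _ assms(2)]) (use r(2) in auto)
  then have "linear (P \<circ> r)"
    unfolding linear_on_def by (intro linearI) auto
  then show ?thesis
    using that r(3) by simp
qed

lemma Cauchy_if_dist_le_mult:
  fixes x :: "nat \<Rightarrow> 'a::metric_space" and y :: "nat \<Rightarrow> 'b::metric_space"
  assumes "Cauchy x" "\<And>m n. dist (y m) (y n) \<le> c * dist (x m) (x n)"
  shows "Cauchy y"
proof (rule metric_CauchyI)
  fix e :: real
  assume "e > 0"
  then obtain M where M: "\<And>m n. M \<le> m \<Longrightarrow> M \<le> n \<Longrightarrow> dist (x m) (x n) < e / (\<bar>c\<bar> + 1)"
    using metric_CauchyD[OF assms(1), of "e / (\<bar>c\<bar> + 1)"] by auto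
  have "dist (y m) (y n) < e" if "M \<le> m" "M \<le> n" for m n
  proof -
    have "dist (y m) (y n) \<le> c * dist (x m) (x n)"
      by (rule assms(2))
    also have "\<dots> \<le> (\<bar>c\<bar> + 1) * dist (x m) (x n)"
      by (intro mult_right_mono) auto
    also have "\<dots> < (\<bar>c\<bar> + 1) * (e / (\<bar>c\<bar> + 1))"
      using M[OF that] by (intro mult_strict_left_mono) auto
    finally show ?thesis
      by simp
  qed
  then show "\<exists>M. \<forall>m\<ge>M. \<forall>n\<ge>M. dist (y m) (y n) < e"
    by blast
qed

lemma closed_span_if_coefficients_bounded:
  fixes B :: "'a::real_normed_vector set"
  assumes "finite B" and bound: "\<And>t. (\<Sum>b\<in>B. \<bar>t b\<bar>) \<le> c * norm (\<Sum>b\<in>B. t b *\<^sub>R b)"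
  shows "closed (span B)"
  unfolding closed_sequential_limits
proof (intro allI impI, elim conjE)
  fix x l
  assume "\<forall>n. x n \<in> span B" and "x \<longlonglongrightarrow> l"
  then have "\<forall>n. \<exists>u. x n = (\<Sum>b\<in>B. u b *\<^sub>R b)"
    using span_finite[OF assms(1)] by auto
  then obtain t where t: "\<And>n. x n = (\<Sum>b\<in>B. t n b *\<^sub>R b)"
    by metis
  have "convergent (\<lambda>n. t n b)" if "b \<in> B" for b
  proof -
    have "dist (t m b) (t n b) \<le> c * dist (x m) (x n)" for m n
    proof -
      have "dist (t m b) (t n b) \<le> (\<Sum>b\<in>B. \<bar>t m b - t n b\<bar>)"
        using member_le_sum[OF that, of "\<lambda>b. \<bar>t m b - t n b\<bar>"] assms(1)
        by (simp add: dist_real_def)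
      also have "\<dots> \<le> c * norm (\<Sum>b\<in>B. (t m b - t n b) *\<^sub>R b)"
        by (rule bound)
      also have "(\<Sum>b\<in>B. (t m b - t n b) *\<^sub>R b) = x m - x n"
        by (simp add: t scaleR_diff_left sum_subtractf)
      finally show ?thesis
        by (simp add: dist_norm)
    qed
    then have "Cauchy (\<lambda>n. t n b)"
      by (rule Cauchy_if_dist_le_mult[OF LIMSEQ_imp_Cauchy[OF \<open>x \<longlonglongrightarrow> l\<close>]])
    then show ?thesis
      by (simp add: Cauchy_convergent_iff)
  qed
  then obtain u where u: "\<And>b. b \<in> B \<Longrightarrow> (\<lambda>n. t n b) \<longlonglongrightarrow> u b"
    unfolding convergent_def by metis
  have "x \<longlonglongrightarrow> (\<Sum>b\<in>B. u b *\<^sub>R b)"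
    unfolding t by (intro tendsto_sum tendsto_scaleR u tendsto_const)
  then have "l = (\<Sum>b\<in>B. u b *\<^sub>R b)"
    using \<open>x \<longlonglongrightarrow> l\<close> LIMSEQ_unique by blast
  then show "l \<in> span B"
    by (simp add: span_base span_scale span_sum)
qed

lemma norm_scaleR_add_ge_if_notin_closed_subspace:
  fixes S :: "'a::real_normed_vector set"
  assumes "subspace S" "closed S" "a \<notin> S"
  obtains e where "e > 0" "\<And>s y. y \<in> S \<Longrightarrow> \<bar>s\<bar> * e \<le> norm (s *\<^sub>R a + y)"
proof
  let ?e = "infdist a S"
  show "?e > 0"
    using infdist_pos_not_in_closed assms subspace_0 by blast
  fix s y
  assume "y \<in> S"
  show "\<bar>s\<bar> * ?e \<le> norm (s *\<^sub>R a + y)"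
  proof (cases "s = 0")
    case False
    have "- (y /\<^sub>R s) \<in> S"
      using \<open>y \<in> S\<close> assms(1) by (simp add: subspace_neg subspace_scale)
    then have "?e \<le> norm (a + y /\<^sub>R s)"
      using infdist_le[of "- (y /\<^sub>R s)" S a] by (simp add: dist_norm)
    then have "\<bar>s\<bar> * ?e \<le> \<bar>s\<bar> * norm (a + y /\<^sub>R s)"
      by (simp add: mult_left_mono)
    also have "\<dots> = norm (s *\<^sub>R a + y)"
      using False by (simp flip: norm_scaleR add: scaleR_add_right)
    finally show ?thesis .
  qed simp
qed

lemma independent_coefficients_bounded:
  fixes B :: "'a::real_normed_vector set"
  assumes "finite B" "independent B"
  obtains c where "c > 0" "\<And>t. (\<Sum>b\<in>B. \<bar>t b\<bar>) \<le> c * norm (\<Sum>b\<in>B. t b *\<^sub>R b)"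
  using assms
proof (induction B arbitrary: thesis rule: finite_induct)
  case empty
  show ?case
    by (rule empty.prems(1)[of 1]) simp_all
next
  case (insert a B)
  have "independent B" "a \<notin> span B"
    using insert.prems(2) insert.hyps(2) by (simp_all add: independent_insert)
  then obtain c where c: "c > 0" "\<And>t. (\<Sum>b\<in>B. \<bar>t b\<bar>) \<le> c * norm (\<Sum>b\<in>B. t b *\<^sub>R b)"
    using insert.IH by blast
  obtain e where e: "e > 0" "\<And>s y. y \<in> span B \<Longrightarrow> \<bar>s\<bar> * e \<le> norm (s *\<^sub>R a + y)"
    using norm_scaleR_add_ge_if_notin_closed_subspace[OF subspace_span
        closed_span_if_coefficients_bounded[OF insert.hyps(1) c(2)] \<open>a \<notin> span B\<close>]
    by blast
  show ?case
  proof (rule insert.prems(1))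
    show "1 / e + c * (1 + norm a / e) > 0"
      using e(1) c(1) by (simp add: add_pos_nonneg)
  next
    fix t :: "'a \<Rightarrow> real"
    define y where "y = (\<Sum>b\<in>B. t b *\<^sub>R b)"
    define x where "x = t a *\<^sub>R a + y"
    have "\<bar>t a\<bar> * e \<le> norm x"
      unfolding x_def y_def by (rule e(2)) (simp add: span_base span_scale span_sum)
    then have ta: "\<bar>t a\<bar> \<le> norm x / e"
      using e(1) by (simp add: pos_le_divide_eq)
    have "(\<Sum>b\<in>B. \<bar>t b\<bar>) \<le> c * norm y"
      unfolding y_def by (rule c(2))
    also have "\<dots> \<le> c * (norm x + \<bar>t a\<bar> * norm a)"
      using norm_triangle_ineq4[of x "t a *\<^sub>R a"] c(1) by (intro mult_left_mono) (simp_all add: x_def)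
    also have "\<dots> \<le> c * (norm x + norm x / e * norm a)"
      using ta c(1) by (intro mult_left_mono add_left_mono mult_right_mono) auto
    finally have "(\<Sum>b\<in>insert a B. \<bar>t b\<bar>) \<le> norm x / e + c * (norm x + norm x / e * norm a)"
      using ta insert.hyps by simp
    also have "\<dots> = (1 / e + c * (1 + norm a / e)) * norm x"
      by (simp add: algebra_simps)
    finally show "(\<Sum>b\<in>insert a B. \<bar>t b\<bar>) \<le> (1 / e + c * (1 + norm a / e)) * norm (\<Sum>b\<in>insert a B. t b *\<^sub>R b)"
      using insert.hyps by (simp add: x_def y_def)
  qed
qed

lemma finite_span_linear_imp_bounded_linear:
  fixes f :: "'a::real_normed_vector \<Rightarrow> 'b::real_normed_vector"
    and S :: "'a set"
  assumes "finite S" "span S = UNIV" "linear f"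
  shows "bounded_linear f"
proof -
  obtain B :: "'a set" where B: "B \<subseteq> S" "independent B" "S \<subseteq> span B"
    by (rule basis_exists)
  have "span B = UNIV"
    using span_minimal[OF B(3) subspace_span] assms(2) by auto
  have "finite B"
    using B(1) assms(1) finite_subset by blast
  then obtain c where c: "c > 0" "\<And>t. (\<Sum>b\<in>B. \<bar>t b\<bar>) \<le> c * norm (\<Sum>b\<in>B. t b *\<^sub>R b)"
    using independent_coefficients_bounded B(2) by blast
  define M where "M = (\<Sum>b\<in>B. norm (f b))"
  have "norm (f x) \<le> norm x * (c * M)" for x
  proof -
    obtain t where x: "x = (\<Sum>b\<in>B. t b *\<^sub>R b)"
      using span_finite[OF \<open>finite B\<close>] \<open>span B = UNIV\<close> by blast
    have "norm (f x) = norm (\<Sum>b\<in>B. t b *\<^sub>R f b)"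
      unfolding x by (simp add: linear_sum[OF assms(3)] linear_scale[OF assms(3)])
    also have "\<dots> \<le> (\<Sum>b\<in>B. \<bar>t b\<bar> * norm (f b))"
      by (rule norm_sum[THEN order_trans]) simp
    also have "\<dots> \<le> (\<Sum>b\<in>B. \<bar>t b\<bar> * M)"
      unfolding M_def using \<open>finite B\<close>
      by (intro sum_mono mult_left_mono member_le_sum) auto
    also have "\<dots> = (\<Sum>b\<in>B. \<bar>t b\<bar>) * M"
      by (simp add: sum_distrib_right)
    also have "\<dots> \<le> c * norm x * M"
      using c(2)[of t] by (intro mult_right_mono) (simp_all add: x M_def sum_nonneg)
    finally show ?thesis
      by (simp add: mult_ac)
  qed
  then show ?thesis
    using assms(3) by (intro bounded_linear_intro) (simp_all add: linear_add linear_scale)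
qed

definition norm_bounded_on :: "'a::real_normed_vector set \<Rightarrow> ('a \<Rightarrow> 'a) \<Rightarrow> bool" where
  "norm_bounded_on W P \<longleftrightarrow> (\<exists>C\<ge>0. \<forall>x\<in>W. norm (P x) \<le> C * norm x)"

lemma linear_on_norm_bounded_on:
  fixes W :: "'a::real_normed_vector set"
  assumes "\<exists>B. finite B \<and> span B = (UNIV :: 'a set)" "subspace W" "linear_on W P"
  shows "norm_bounded_on W P"
proof -
  obtain g where g: "linear g" "\<And>x. x \<in> W \<Longrightarrow> g x = P x"
    using linear_on_extends_to_linear[OF assms(2,3)] by blast
  then have "bounded_linear g"
    using assms(1) finite_span_linear_imp_bounded_linear by blast
  then obtain K where "K \<ge> 0" "\<And>x. norm (g x) \<le> norm x * K"
    using bounded_linear.nonneg_bounded by blast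
  then show ?thesis
    unfolding norm_bounded_on_def using g(2) by (metis mult.commute)
qed

lemma opnorm_on_least:
  assumes "0 \<le> C" "\<And>x. x \<in> W \<Longrightarrow> norm (P x) \<le> C * norm x"
  shows "opnorm_on W P \<le> C"
  unfolding opnorm_on_def by (rule cInf_lower) (use assms in \<open>auto simp: bdd_below_def\<close>)

lemma opnorm_on_nonneg:
  assumes "norm_bounded_on W P"
  shows "0 \<le> opnorm_on W P"
  unfolding opnorm_on_def
  by (rule cInf_greatest) (use assms in \<open>auto simp: norm_bounded_on_def\<close>)

lemma norm_le_opnorm_on:
  assumes "norm_bounded_on W P" "x \<in> W"
  shows "norm (P x) \<le> opnorm_on W P * norm x"
proof (cases "x = 0")
  case True
  then show ?thesis
    using assms unfolding norm_bounded_on_def by force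
next
  case False
  have "norm (P x) / norm x \<le> opnorm_on W P"
    unfolding opnorm_on_def
  proof (rule cInf_greatest)
    show "{C. 0 \<le> C \<and> (\<forall>x\<in>W. norm (P x) \<le> C * norm x)} \<noteq> {}"
      using assms(1) unfolding norm_bounded_on_def by blast
  qed (use False assms(2) in \<open>auto simp: divide_le_eq\<close>)
  then show ?thesis
    using False by (simp add: divide_le_eq)
qed

lemma opnorm_on_comp_le:
  assumes "norm_bounded_on W P" "norm_bounded_on Y Q" "P ` W \<subseteq> Y" "X \<subseteq> W"
  shows "opnorm_on X (Q \<circ> P) \<le> opnorm_on Y Q * opnorm_on W P"
proof (rule opnorm_on_least)
  show "0 \<le> opnorm_on Y Q * opnorm_on W P"
    using assms(1,2) by (simp add: opnorm_on_nonneg)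
  fix x
  assume "x \<in> X"
  then have "x \<in> W" "P x \<in> Y"
    using assms(3,4) by auto
  have "norm (Q (P x)) \<le> opnorm_on Y Q * norm (P x)"
    by (rule norm_le_opnorm_on[OF assms(2) \<open>P x \<in> Y\<close>])
  also have "\<dots> \<le> opnorm_on Y Q * (opnorm_on W P * norm x)"
    using norm_le_opnorm_on[OF assms(1) \<open>x \<in> W\<close>] opnorm_on_nonneg[OF assms(2)]
    by (rule mult_left_mono)
  finally show "norm ((Q \<circ> P) x) \<le> opnorm_on Y Q * opnorm_on W P * norm x"
    by (simp add: mult_ac)
qed

lemma projections_onto_nonempty:
  assumes "subspace V"
  shows "projections_onto V W \<noteq> {}"
proof -
  obtain g where "linear g" "\<And>x. g x \<in> V" "\<And>x. x \<in> V \<Longrightarrow> g x = x"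
    using linear_exists_left_inverse_on[OF linear_id assms inj_on_id] by auto
  then have "g \<in> projections_onto V W"
    unfolding projections_onto_def by (auto intro: linear_imp_linear_on)
  then show ?thesis
    by blast
qed

lemma projections_onto_comp:
  assumes "P \<in> projections_onto Y W" "Q \<in> projections_onto Y0 Y" "X \<subseteq> W" "Y0 \<subseteq> Y"
  shows "Q \<circ> P \<in> projections_onto Y0 X"
proof -
  have P: "linear_on W P" "P ` W \<subseteq> Y" "\<And>v. v \<in> Y \<Longrightarrow> P v = v"
    using assms(1) unfolding projections_onto_def by auto
  have Q: "linear_on Y Q" "Q ` Y \<subseteq> Y0" "\<And>v. v \<in> Y0 \<Longrightarrow> Q v = v"
    using assms(2) unfolding projections_onto_def by auto
  have "linear_on X P"
    using P(1) assms(3) unfolding linear_on_def by (simp add: subset_iff)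
  moreover have "P ` X \<subseteq> Y"
    using P(2) assms(3) by blast
  ultimately have "linear_on X (Q \<circ> P)"
    using Q(1) by (rule linear_on_compose)
  moreover have "(Q \<circ> P) ` X \<subseteq> Y0"
    using \<open>P ` X \<subseteq> Y\<close> Q(2) by auto
  moreover have "(Q \<circ> P) v = v" if "v \<in> Y0" for v
    using that assms(4) P(3) Q(3) by auto
  ultimately show ?thesis
    unfolding projections_onto_def by blast
qed

lemma projection_norm_bounded_on:
  fixes W :: "'a::real_normed_vector set"
  assumes "\<exists>B. finite B \<and> span B = (UNIV :: 'a set)" "subspace W"
    and "P \<in> projections_onto V W"
  shows "norm_bounded_on W P"
proof (rule linear_on_norm_bounded_on[OF assms(1,2)])
  show "linear_on W P"
    using assms(3) unfolding projections_onto_def by blast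
qed

lemma proj_const_le_opnorm_on:
  fixes W :: "'a::real_normed_vector set"
  assumes "\<exists>B. finite B \<and> span B = (UNIV :: 'a set)" "subspace W"
    and "P \<in> projections_onto V W"
  shows "proj_const V W \<le> opnorm_on W P"
  unfolding proj_const_def
proof (rule cInf_lower)
  show "bdd_below (opnorm_on W ` projections_onto V W)"
    using opnorm_on_nonneg[OF projection_norm_bounded_on[OF assms(1,2)]]
    unfolding bdd_below_def by blast
qed (use assms(3) in blast)

lemma proj_const_nonneg:
  fixes W :: "'a::real_normed_vector set"
  assumes "\<exists>B. finite B \<and> span B = (UNIV :: 'a set)" "subspace W" "subspace V"
  shows "0 \<le> proj_const V W"
  unfolding proj_const_def
  using projections_onto_nonempty[OF assms(3)]
    opnorm_on_nonneg[OF projection_norm_bounded_on[OF assms(1,2)]]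
  by (auto intro: cInf_greatest)

lemma le_proj_const_mult:
  assumes "subspace V" "0 \<le> c" "\<And>P. P \<in> projections_onto V W \<Longrightarrow> a \<le> opnorm_on W P * c"
  shows "a \<le> proj_const V W * c"
proof (cases "c = 0")
  case True
  obtain P where "P \<in> projections_onto V W"
    using projections_onto_nonempty[OF assms(1)] by blast
  then show ?thesis
    using assms(3) True by simp
next
  case False
  then have "c > 0"
    using assms(2) by simp
  have "a / c \<le> proj_const V W"
    unfolding proj_const_def
  proof (rule cInf_greatest)
    show "opnorm_on W ` projections_onto V W \<noteq> {}"
      using projections_onto_nonempty[OF assms(1)] by blast
  next
    fix r
    assume "r \<in> opnorm_on W ` projections_onto V W"
    then show "a / c \<le> r"
      using assms(3) \<open>c > 0\<close> by (auto simp: divide_le_eq)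
  qed
  then show ?thesis
    using \<open>c > 0\<close> by (simp add: divide_le_eq)
qed

lemma proj_const_submultiplicative:
  fixes W X Y Y0 :: "'a::real_normed_vector set"
  assumes fin_dim: "\<exists>B. finite B \<and> span B = (UNIV :: 'a set)"
    and "subspace W" "subspace X" "subspace Y" "subspace Y0" "X \<subseteq> W" "Y0 \<subseteq> Y"
  shows "proj_const Y0 X \<le> proj_const Y0 Y * proj_const Y W"
proof -
  have comp_bound: "proj_const Y0 X \<le> opnorm_on Y Q * opnorm_on W P"
    if P: "P \<in> projections_onto Y W" and Q: "Q \<in> projections_onto Y0 Y" for P Q
  proof -
    have "P ` W \<subseteq> Y"
      using P unfolding projections_onto_def by blast
    have "proj_const Y0 X \<le> opnorm_on X (Q \<circ> P)"
      by (rule proj_const_le_opnorm_on[OF fin_dim \<open>subspace X\<close> projections_onto_comp[OF P Q assms(6,7)]])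
    also have "\<dots> \<le> opnorm_on Y Q * opnorm_on W P"
      by (rule opnorm_on_comp_le[OF projection_norm_bounded_on[OF fin_dim \<open>subspace W\<close> P]
            projection_norm_bounded_on[OF fin_dim \<open>subspace Y\<close> Q] \<open>P ` W \<subseteq> Y\<close> assms(6)])
    finally show ?thesis .
  qed
  have "proj_const Y0 X \<le> proj_const Y0 Y * opnorm_on W P"
    if P: "P \<in> projections_onto Y W" for P
  proof (rule le_proj_const_mult[OF \<open>subspace Y0\<close>])
    show "0 \<le> opnorm_on W P"
      by (rule opnorm_on_nonneg[OF projection_norm_bounded_on[OF fin_dim \<open>subspace W\<close> P]])
  qed (rule comp_bound[OF P])
  then show ?thesis
    using le_proj_const_mult[OF \<open>subspace Y\<close> proj_const_nonneg[OF fin_dim \<open>subspace Y\<close> \<open>subspace Y0\<close>]]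
    by (simp add: mult.commute)
qed

theorem mainTheorem14:
  fixes Y X0 :: "'a::real_normed_vector set" and n :: nat
  assumes "dim (UNIV :: 'a set) = n"
    and "\<exists>B. finite B \<and> span B = (UNIV :: 'a set)"
    and "subspace Y" and "subspace X0"
    and "X0 \<inter> Y \<noteq> {0}"
    and "proj_const (X0 \<inter> Y) Y = 1"
  shows "proj_const Y UNIV \<ge> proj_const (X0 \<inter> Y) X0"
proof -
  have "proj_const (X0 \<inter> Y) X0 \<le> proj_const (X0 \<inter> Y) Y * proj_const Y UNIV"
    by (rule proj_const_submultiplicative[OF assms(2) subspace_UNIV assms(4,3)
          subspace_inter[OF assms(4,3)]]) auto
  then show ?thesis
    using assms(6) by simp
qed

end
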